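(* Let $n\ge1$, $\mathfrak g=\mathfrak{osp}(1,2n)\subset\mathfrak{gl}(1,2n)$, and $p\ge0$. Then: (1) for all homogeneous $X_1,\ldots,X_{2p+1}\in\mathfrak g$, $\mathcal P_{2p+1}(X_1,\ldots,X_{2p+1})\in\mathfrak g$; (2) for all homogeneous $X_1,\ldots,X_{4p+1}\in\mathfrak g$, $\mathcal A_{4p+1}(X_1,\ldots,X_{4p+1})\in\mathfrak g$; (3) for all homogeneous $X_1,\ldots,X_{4p+2}\in\mathfrak g$, $\mathcal A_{4p+2}(X_1,\ldots,X_{4p+2})\in\mathfrak g$.
   Context: $V=V_{\bar0}\oplus V_{\bar1}$ with $\dim V_{\bar0}=1$, $\dim V_{\bar1}=2n$, $\mathfrak{gl}(1,2n)=\mathrm{End}(V)$ with the natural grading, products being compositions. Let $\beta$ be an even nondegenerate bilinear form on $V$, symmetric on $V_{\bar0}$, symplectic on $V_{\bar1}$, $\beta(V_{\bar0},V_{\bar1})=0$; $\mathfrak{osp}(1,2n)$ is the span of homogeneous $X\in\mathrm{End}(V)$ with $\beta(XY,Z)+(-1)^{xy}\beta(Y,XZ)=0$ for all homogeneous $Y,Z$. For homogeneous $\mathcal X=(X_1,\dots,X_m)$ and $\sigma\in\mathfrak S_m$, $\epsilon(\sigma)$ is the sign and $\epsilon(\sigma,\mathcal X)=(-1)^K$ with $K$ the number of pairs $i<j$ with $\sigma(i)>\sigma(j)$ and $X_{\sigma(i)},X_{\sigma(j)}$ both odd. $\mathcal P_m(X_1,\dots,X_m)=\sum_{\sigma\in\mathfrak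 S_m}\epsilon(\sigma,\mathcal X)X_{\sigma(1)}\cdots X_{\sigma(m)}$ and $\mathcal A_m(X_1,\dots,X_m)=\sum_\sigma\epsilon(\sigma)\epsilon(\sigma,\mathcal X)X_{\sigma(1)}\cdots X_{\sigma(m)}$. *)

theory Defs
  imports "Jordan_Normal_Form.Determinant" "HOL-Combinatorics.Permutations"
begin

(* V = K^(2n+1) with basis e_0,...,e_{2n}; e_0 spans V_0 (even), e_1..e_{2n} span V_1 (odd).
   Parity of a basis index: True = odd. *)
definition idx_par :: "nat \<Rightarrow> bool" where
  "idx_par i \<longleftrightarrow> i \<noteq> 0"

definition par_sign :: "bool \<Rightarrow> 'a::ring_1" where
  "par_sign b = (if b then -1 else 1)"

definition hom_vec :: "nat \<Rightarrow> bool \<Rightarrow> 'a::zero vec \<Rightarrow> bool" where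
  "hom_vec N p v \<longleftrightarrow> v \<in> carrier_vec N \<and> (\<forall>i<N. idx_par i \<noteq> p \<longrightarrow> v $ i = 0)"

definition hom_mat :: "nat \<Rightarrow> bool \<Rightarrow> 'a::zero mat \<Rightarrow> bool" where
  "hom_mat N p X \<longleftrightarrow> X \<in> carrier_mat N N \<and>
     (\<forall>i<N. \<forall>j<N. (idx_par i \<noteq> idx_par j) \<noteq> p \<longrightarrow> X $$ (i,j) = 0)"

definition bform :: "'a::comm_ring_1 mat \<Rightarrow> 'a vec \<Rightarrow> 'a vec \<Rightarrow> 'a" where
  "bform B u v = u \<bullet> (B *\<^sub>v v)"

definition osp_form :: "nat \<Rightarrow> 'a::comm_ring_1 mat \<Rightarrow> bool" where
  "osp_form n B \<longleftrightarrow> B \<in> carrier_mat (2*n+1) (2*n+1) \<and> det B \<noteq> 0 \<and>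
     (\<forall>i<2*n+1. \<forall>j<2*n+1. idx_par i \<noteq> idx_par j \<longrightarrow> B $$ (i,j) = 0) \<and>
     (\<forall>i<2*n+1. \<forall>j<2*n+1. \<not> idx_par i \<and> \<not> idx_par j \<longrightarrow> B $$ (i,j) = B $$ (j,i)) \<and>
     (\<forall>i<2*n+1. \<forall>j<2*n+1. idx_par i \<and> idx_par j \<longrightarrow> B $$ (i,j) = - B $$ (j,i)) \<and>
     (\<forall>i<2*n+1. idx_par i \<longrightarrow> B $$ (i,i) = 0)"

definition osp_hom :: "nat \<Rightarrow> 'a::comm_ring_1 mat \<Rightarrow> bool \<Rightarrow> 'a mat \<Rightarrow> bool" where
  "osp_hom n B x X \<longleftrightarrow> hom_mat (2*n+1) x X \<and>
     (\<forall>y z py pz. hom_vec (2*n+1) py y \<longrightarrow> hom_vec (2*n+1) pz z \<longrightarrow>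
        bform B (X *\<^sub>v y) z + par_sign (x \<and> py) * bform B y (X *\<^sub>v z) = 0)"

definition in_osp :: "nat \<Rightarrow> 'a::comm_ring_1 mat \<Rightarrow> 'a mat \<Rightarrow> bool" where
  "in_osp n B X \<longleftrightarrow> (\<exists>X0 X1. osp_hom n B False X0 \<and> osp_hom n B True X1 \<and> X = X0 + X1)"

definition mprod :: "nat \<Rightarrow> 'a::semiring_1 mat list \<Rightarrow> 'a mat" where
  "mprod N Ms = foldr (\<lambda>A C. A * C) Ms (1\<^sub>m N)"

(* Koszul sign epsilon(sigma, X); ps ! i is the parity of X_{i+1} (True = odd) *)
definition koszul_sign :: "nat \<Rightarrow> (nat \<Rightarrow> nat) \<Rightarrow> bool list \<Rightarrow> 'a::ring_1" where
  "koszul_sign m \<sigma> ps = (-1) ^ card {(i,j). i < j \<and> j < m \<and> \<sigma> j < \<sigma> i \<and> ps ! (\<sigma> i) \<and> ps ! (\<sigma> j)}"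

definition Pm :: "nat \<Rightarrow> 'a::comm_ring_1 mat list \<Rightarrow> bool list \<Rightarrow> 'a mat" where
  "Pm N Xs ps = (let m = length Xs in
     mat N N (\<lambda>(a,b). \<Sum>\<sigma>\<in>{\<sigma>. \<sigma> permutes {..<m}}.
        koszul_sign m \<sigma> ps * mprod N (map (\<lambda>i. Xs ! (\<sigma> i)) [0..<m]) $$ (a,b)))"

definition Am :: "nat \<Rightarrow> 'a::comm_ring_1 mat list \<Rightarrow> bool list \<Rightarrow> 'a mat" where
  "Am N Xs ps = (let m = length Xs in
     mat N N (\<lambda>(a,b). \<Sum>\<sigma>\<in>{\<sigma>. \<sigma> permutes {..<m}}.
        of_int (sign \<sigma>) * koszul_sign m \<sigma> ps * mprod N (map (\<lambda>i. Xs ! (\<sigma> i)) [0..<m]) $$ (a,b)))"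

definition hom_osp_tuple :: "nat \<Rightarrow> 'a::comm_ring_1 mat \<Rightarrow> 'a mat list \<Rightarrow> bool list \<Rightarrow> bool" where
  "hom_osp_tuple n B Xs ps \<longleftrightarrow> length ps = length Xs \<and>
     (\<forall>i<length Xs. osp_hom n B (ps ! i) (Xs ! i))"

end

theory Submission
  imports Defs
begin

(* The defining condition of osp(1,2n) reads X^T B = S_x B (-X), where S_x is the diagonal
   matrix with entry (-1)^(x |i|) at the basis index i: the super-adjoint of a homogeneous X
   is -X. Super-adjoints reverse products up to sign: the super-adjoint of X_1 ... X_m is
   (-1)^(m + C(c,2)) X_m ... X_1, where c is the number of odd factors. The reversed product
   X_s(m) ... X_s(1) is the term of s o w, w the reversal i -> m-1-i, and every pair of odd
   factors is inverted by exactly one of s and s o w, so their Koszul signs differ by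
   (-1)^C(c,2). Hence the super-adjoint of the sum of W(s) eps(s,X) X_s(1) ... X_s(m) is the same
   sum with weights W(s o w) (-1)^m. This is -W(s) for W = 1 and m odd, and for W = sign and
   m = 1, 2 mod 4, since sign w = (-1)^(m div 2). *)

section \<open>Parity sign matrices and super-adjoints\<close>

definition parity_sign_mat :: "nat \<Rightarrow> bool \<Rightarrow> 'a::comm_ring_1 mat" where
  "parity_sign_mat N x = mat N N (\<lambda>(i,j). if i = j then par_sign (x \<and> idx_par i) else 0)"

definition super_adjoint :: "nat \<Rightarrow> 'a::comm_ring_1 mat \<Rightarrow> bool \<Rightarrow> 'a mat \<Rightarrow> 'a mat \<Rightarrow> bool" where
  "super_adjoint N B x X Y \<longleftrightarrow> transpose_mat X * B = parity_sign_mat N x * (B * Y)"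

lemma parity_sign_mat_carrier [simp]: "parity_sign_mat N x \<in> carrier_mat N N"
  by (simp add: parity_sign_mat_def)

lemma parity_sign_mat_dim [simp]:
  "dim_row (parity_sign_mat N x) = N" "dim_col (parity_sign_mat N x) = N"
  by (simp_all add: parity_sign_mat_def)

lemma parity_sign_mat_False: "parity_sign_mat N False = 1\<^sub>m N"
  by (rule eq_matI) (auto simp: parity_sign_mat_def par_sign_def)

lemma sum_diagonal_term:
  fixes i N :: nat
  assumes "i < N"
  shows "(\<Sum>k = 0..<N. (if i = k then c else 0) * f k) = (c * f i :: 'a::semiring_1)"
    and "(\<Sum>k = 0..<N. f k * (if k = i then g k else 0)) = (f i * g i :: 'a::semiring_1)"
  using assms by (simp_all add: if_distrib[of "\<lambda>a. a * _"] if_distrib[of "\<lambda>a. _ * a"] cong: if_cong)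

lemma parity_sign_mat_mult_index:
  assumes "A \<in> carrier_mat N M" and "i < N" and "j < M"
  shows "(parity_sign_mat N x * A) $$ (i,j) = par_sign (x \<and> idx_par i) * A $$ (i,j)"
  using assms by (simp add: parity_sign_mat_def scalar_prod_def sum_diagonal_term)

lemma mult_parity_sign_mat_index:
  assumes "A \<in> carrier_mat M N" and "i < M" and "j < N"
  shows "(A * parity_sign_mat N x) $$ (i,j) = A $$ (i,j) * par_sign (x \<and> idx_par j)"
  using assms by (simp add: parity_sign_mat_def scalar_prod_def sum_diagonal_term)

lemma parity_sign_mat_mult_vec_index:
  assumes "w \<in> carrier_vec N" and "i < N"
  shows "(parity_sign_mat N x *\<^sub>v w) $ i = par_sign (x \<and> idx_par i) * w $ i"
  using assms by (simp add: parity_sign_mat_def scalar_prod_def sum_diagonal_term)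

lemma parity_sign_mat_mult:
  "parity_sign_mat N x * parity_sign_mat N y = (parity_sign_mat N (x \<noteq> y) :: 'a::comm_ring_1 mat)"
  (is "?L = ?R")
proof (rule eq_matI)
  fix i j assume "i < dim_row ?R" "j < dim_col ?R"
  then show "?L $$ (i,j) = ?R $$ (i,j)"
    using parity_sign_mat_mult_index[of "parity_sign_mat N y" N N i j x]
    by (auto simp: parity_sign_mat_def par_sign_def simp del: index_mult_mat)
qed auto

lemma transpose_hom_mat_mult_parity_sign_mat:
  assumes Y: "hom_mat N y Y"
  shows "transpose_mat Y * parity_sign_mat N x =
    par_sign (x \<and> y) \<cdot>\<^sub>m (parity_sign_mat N x * transpose_mat Y)" (is "?L = ?R")
proof (rule eq_matI)
  have YC: "Y \<in> carrier_mat N N" using Y by (simp add: hom_mat_def)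
  fix i j assume "i < dim_row ?R" and "j < dim_col ?R"
  then have i: "i < N" and j: "j < N" using YC by auto
  have "Y $$ (j,i) * par_sign (x \<and> idx_par j) =
      par_sign (x \<and> y) * (par_sign (x \<and> idx_par i) * Y $$ (j,i))"
  proof (cases "Y $$ (j,i) = 0")
    case False
    then have "(idx_par j \<noteq> idx_par i) = y" using Y i j by (auto simp: hom_mat_def)
    then show ?thesis by (auto simp: par_sign_def)
  qed simp
  then show "?L $$ (i,j) = ?R $$ (i,j)"
    using YC i j parity_sign_mat_mult_index[of "transpose_mat Y" N N i j x]
      mult_parity_sign_mat_index[of "transpose_mat Y" N N i j x]
    by (simp del: index_mult_mat(1))
qed (use Y in \<open>auto simp: hom_mat_def\<close>)

lemma hom_mat_mult:
  assumes X: "hom_mat N x X" and Y: "hom_mat N y Y"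
  shows "hom_mat N (x \<noteq> y) (X * Y)"
proof -
  have XC: "X \<in> carrier_mat N N" and YC: "Y \<in> carrier_mat N N"
    using X Y by (simp_all add: hom_mat_def)
  have "(X * Y) $$ (i,j) = 0"
    if i: "i < N" and j: "j < N" and p: "(idx_par i \<noteq> idx_par j) \<noteq> (x \<noteq> y)" for i j
  proof -
    have "X $$ (i,k) * Y $$ (k,j) = 0" if k: "k < N" for k
    proof (cases "(idx_par i \<noteq> idx_par k) = x")
      case True
      then have "(idx_par k \<noteq> idx_par j) \<noteq> y" using p by auto
      then show ?thesis using Y k j by (simp add: hom_mat_def)
    qed (use X i k in \<open>simp add: hom_mat_def\<close>)
    then show ?thesis using XC YC i j by (simp add: scalar_prod_def)
  qed
  then show ?thesis using XC YC by (auto simp: hom_mat_def)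
qed

lemma super_adjoint_mult:
  assumes B: "B \<in> carrier_mat N N" and X: "X \<in> carrier_mat N N" and X': "X' \<in> carrier_mat N N"
    and Y: "hom_mat N y Y" and Y': "Y' \<in> carrier_mat N N"
    and adj_X: "super_adjoint N B x X X'" and adj_Y: "super_adjoint N B y Y Y'"
  shows "super_adjoint N B (x \<noteq> y) (X * Y) (par_sign (x \<and> y) \<cdot>\<^sub>m (Y' * X'))"
proof -
  have YC: "Y \<in> carrier_mat N N" using Y by (simp add: hom_mat_def)
  let ?s = "par_sign (x \<and> y)" and ?S = "parity_sign_mat N"
  note assoc = assoc_mult_mat[of _ N N _ N _ N] mult_carrier_mat[of _ N N _ N]
  have "transpose_mat (X * Y) * B = transpose_mat Y * (transpose_mat X * B)"
    using X YC B by (simp add: transpose_mult assoc)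
  also have "\<dots> = (transpose_mat Y * ?S x) * (B * X')"
    using adj_X YC B X' by (simp add: super_adjoint_def assoc)
  also have "\<dots> = ?s \<cdot>\<^sub>m (?S x * ((transpose_mat Y * B) * X'))"
    using YC B X' by (simp add: transpose_hom_mat_mult_parity_sign_mat[OF Y] assoc
        mult_smult_assoc_mat[of _ N N _ N])
  also have "\<dots> = ?s \<cdot>\<^sub>m ((?S x * ?S y) * (B * (Y' * X')))"
    using adj_Y B X' Y' by (simp add: super_adjoint_def assoc)
  also have "\<dots> = ?S (x \<noteq> y) * (B * (?s \<cdot>\<^sub>m (Y' * X')))"
    using B X' Y' by (simp add: parity_sign_mat_mult mult_smult_distrib[of _ N N _ N])
  finally show ?thesis by (simp add: super_adjoint_def)
qed

lemma super_adjoint_iff_index: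
  assumes "B \<in> carrier_mat N N" "X \<in> carrier_mat N N" "Y \<in> carrier_mat N N"
  shows "super_adjoint N B x X Y \<longleftrightarrow> (\<forall>i<N. \<forall>j<N.
     (\<Sum>k = 0..<N. X $$ (k,i) * B $$ (k,j)) =
       par_sign (x \<and> idx_par i) * (\<Sum>k = 0..<N. B $$ (i,k) * Y $$ (k,j)))"
proof -
  have "super_adjoint N B x X Y \<longleftrightarrow>
      (\<forall>i<N. \<forall>j<N. (transpose_mat X * B) $$ (i,j) = (parity_sign_mat N x * (B * Y)) $$ (i,j))"
    using assms by (auto simp: super_adjoint_def mat_eq_iff simp del: index_mult_mat(1))
  moreover have
    "(parity_sign_mat N x * (B * Y)) $$ (i,j) = par_sign (x \<and> idx_par i) * (B * Y) $$ (i,j)" if "i < N" "j < N" for i j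
    using assms that by (intro parity_sign_mat_mult_index) auto
  ultimately show ?thesis
    using assms by (simp add: scalar_prod_def)
qed

lemma hom_mat_lincomb:
  fixes f :: "'b \<Rightarrow> 'a::semiring_0"
  assumes "\<And>\<sigma>. \<sigma> \<in> S \<Longrightarrow> hom_mat N x (M \<sigma>)"
  shows "hom_mat N x (mat N N (\<lambda>(a,b). \<Sum>\<sigma>\<in>S. f \<sigma> * M \<sigma> $$ (a,b)))"
  using assms by (simp add: hom_mat_def)

lemma super_adjoint_lincomb:
  fixes f :: "'b \<Rightarrow> 'a::comm_ring_1"
  assumes B: "B \<in> carrier_mat N N"
    and M: "\<And>\<sigma>. \<sigma> \<in> S \<Longrightarrow> M \<sigma> \<in> carrier_mat N N" and M': "\<And>\<sigma>. \<sigma> \<in> S \<Longrightarrow> M' \<sigma> \<in> carrier_mat N N"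
    and adj: "\<And>\<sigma>. \<sigma> \<in> S \<Longrightarrow> super_adjoint N B x (M \<sigma>) (M' \<sigma>)"
  shows "super_adjoint N B x (mat N N (\<lambda>(a,b). \<Sum>\<sigma>\<in>S. f \<sigma> * M \<sigma> $$ (a,b)))
                              (mat N N (\<lambda>(a,b). \<Sum>\<sigma>\<in>S. f \<sigma> * M' \<sigma> $$ (a,b)))"
proof -
  have "(\<Sum>k = 0..<N. (\<Sum>\<sigma>\<in>S. f \<sigma> * M \<sigma> $$ (k,i)) * B $$ (k,j))
      = par_sign (x \<and> idx_par i) * (\<Sum>k = 0..<N. B $$ (i,k) * (\<Sum>\<sigma>\<in>S. f \<sigma> * M' \<sigma> $$ (k,j)))"
    if i: "i < N" and j: "j < N" for i j
  proof -
    have "(\<Sum>k = 0..<N. (\<Sum>\<sigma>\<in>S. f \<sigma> * M \<sigma> $$ (k,i)) * B $$ (k,j))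
        = (\<Sum>\<sigma>\<in>S. f \<sigma> * (\<Sum>k = 0..<N. M \<sigma> $$ (k,i) * B $$ (k,j)))"
      by (simp add: sum_distrib_left sum_distrib_right sum.swap[of _ "{0..<N}"] mult.assoc)
    also have "\<dots> =
        (\<Sum>\<sigma>\<in>S. f \<sigma> * (par_sign (x \<and> idx_par i) * (\<Sum>k = 0..<N. B $$ (i,k) * M' \<sigma> $$ (k,j))))"
      using adj M M' B i j by (intro sum.cong refl) (simp add: super_adjoint_iff_index)
    also have "\<dots> =
        par_sign (x \<and> idx_par i) * (\<Sum>k = 0..<N. B $$ (i,k) * (\<Sum>\<sigma>\<in>S. f \<sigma> * M' \<sigma> $$ (k,j)))"
      by (simp add: sum_distrib_left sum.swap[of _ "{0..<N}"] ac_simps)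
    finally show ?thesis .
  qed
  then show ?thesis
    using B M M' by (simp add: super_adjoint_iff_index)
qed

section \<open>Orthosymplectic elements\<close>

lemma scalar_prod_parity_sign_mat_mult_vec:
  assumes y: "hom_vec N py y" and w: "w \<in> carrier_vec N"
  shows "y \<bullet> (parity_sign_mat N x *\<^sub>v w) = par_sign (x \<and> py) * (y \<bullet> w)"
proof -
  have "y \<bullet> (parity_sign_mat N x *\<^sub>v w) = (\<Sum>i = 0..<N. y $ i * (par_sign (x \<and> idx_par i) * w $ i))"
    using w by (simp add: scalar_prod_def parity_sign_mat_mult_vec_index del: index_mult_mat_vec)
  also have "\<dots> = (\<Sum>i = 0..<N. par_sign (x \<and> py) * (y $ i * w $ i))"
  proof (rule sum.cong[OF refl])
    fix i assume "i \<in> {0..<N}"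
    then show "y $ i * (par_sign (x \<and> idx_par i) * w $ i) = par_sign (x \<and> py) * (y $ i * w $ i)"
      using y by (cases "idx_par i = py") (auto simp: hom_vec_def)
  qed
  finally show ?thesis
    using w by (simp add: scalar_prod_def sum_distrib_left)
qed

lemma bform_mult_vec_left:
  assumes "X \<in> carrier_mat N N" "B \<in> carrier_mat N N" "y \<in> carrier_vec N" "z \<in> carrier_vec N"
  shows "bform B (X *\<^sub>v y) z = y \<bullet> ((transpose_mat X * B) *\<^sub>v z)"
  using assms transpose_vec_mult_scalar[of "transpose_mat X" N N "B *\<^sub>v z" y]
  by (simp add: bform_def assoc_mult_mat_vec[of _ N N _ N])

lemma bform_mult_vec_right:
  assumes "X \<in> carrier_mat N N" "B \<in> carrier_mat N N" "z \<in> carrier_vec N"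
  shows "bform B y (X *\<^sub>v z) = y \<bullet> ((B * X) *\<^sub>v z)"
  using assms by (simp add: bform_def assoc_mult_mat_vec[of _ N N _ N])

lemma unit_vec_scalar_prod_mult_unit_vec:
  assumes "M \<in> carrier_mat N N" "i < N" "j < N"
  shows "unit_vec N i \<bullet> (M *\<^sub>v unit_vec N j) = (M $$ (i,j) :: 'a::comm_ring_1)"
  using assms by simp

lemma super_adjoint_iff_bform:
  assumes B: "B \<in> carrier_mat N N" and X: "X \<in> carrier_mat N N" and Y: "Y \<in> carrier_mat N N"
  shows "super_adjoint N B x X Y \<longleftrightarrow>
    (\<forall>y z py pz. hom_vec N py y \<longrightarrow> hom_vec N pz z \<longrightarrow>
       bform B (X *\<^sub>v y) z = par_sign (x \<and> py) * bform B y (Y *\<^sub>v z))"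
proof safe
  fix y z :: "'a vec" and py pz
  assume adj: "super_adjoint N B x X Y" and y: "hom_vec N py y" and z: "hom_vec N pz z"
  have yz: "y \<in> carrier_vec N" "z \<in> carrier_vec N" using y z by (simp_all add: hom_vec_def)
  have "bform B (X *\<^sub>v y) z = y \<bullet> (parity_sign_mat N x *\<^sub>v ((B * Y) *\<^sub>v z))"
    using adj B X Y yz
    by (simp add: bform_mult_vec_left super_adjoint_def assoc_mult_mat_vec[of _ N N _ N])
  also have "\<dots> = par_sign (x \<and> py) * bform B y (Y *\<^sub>v z)"
    using B Y yz by (simp add: scalar_prod_parity_sign_mat_mult_vec[OF y] bform_mult_vec_right)
  finally show "bform B (X *\<^sub>v y) z = par_sign (x \<and> py) * bform B y (Y *\<^sub>v z)" .
next
  assume bf: "\<forall>y z py pz. hom_vec N py y \<longrightarrow> hom_vec N pz z \<longrightarrow>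
       bform B (X *\<^sub>v y) z = par_sign (x \<and> py) * bform B y (Y *\<^sub>v z)"
  show "super_adjoint N B x X Y"
    unfolding super_adjoint_def
  proof (rule eq_matI)
    let ?R = "parity_sign_mat N x * (B * Y)"
    fix i j assume "i < dim_row ?R" "j < dim_col ?R"
    then have i: "i < N" and j: "j < N" using Y by auto
    have unit: "hom_vec N (idx_par k) (unit_vec N k :: 'a vec)" if "k < N" for k
      using that by (auto simp: hom_vec_def)
    have "(transpose_mat X * B) $$ (i,j) = unit_vec N i \<bullet> ((transpose_mat X * B) *\<^sub>v unit_vec N j)"
      using B X i j
      by (simp only: unit_vec_scalar_prod_mult_unit_vec mult_carrier_mat transpose_carrier_mat)
    also have "\<dots> = bform B (X *\<^sub>v unit_vec N i) (unit_vec N j)"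
      using B X i j by (simp only: bform_mult_vec_left unit_vec_carrier)
    also have "\<dots> = par_sign (x \<and> idx_par i) * bform B (unit_vec N i) (Y *\<^sub>v unit_vec N j)"
      using bf unit i j by blast
    also have "\<dots> = par_sign (x \<and> idx_par i) * (unit_vec N i \<bullet> ((B * Y) *\<^sub>v unit_vec N j))"
      using B Y j by (simp only: bform_mult_vec_right unit_vec_carrier)
    also have "\<dots> = ?R $$ (i,j)"
      using B Y i j parity_sign_mat_mult_index[of "B * Y" N N i j x]
      by (simp only: unit_vec_scalar_prod_mult_unit_vec mult_carrier_mat)
    finally show "(transpose_mat X * B) $$ (i,j) = ?R $$ (i,j)" .
  qed (use B X Y in auto)
qed

lemma osp_hom_iff_super_adjoint:
  assumes "B \<in> carrier_mat (2*n+1) (2*n+1)"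
  shows "osp_hom n B x X \<longleftrightarrow> hom_mat (2*n+1) x X \<and> super_adjoint (2*n+1) B x X (- X)"
proof -
  define N where "N = 2*n+1"
  have B: "B \<in> carrier_mat N N" using assms by (simp add: N_def)
  have osp: "osp_hom n B x X \<longleftrightarrow> hom_mat N x X \<and>
      (\<forall>y z py pz. hom_vec N py y \<longrightarrow> hom_vec N pz z \<longrightarrow>
         bform B (X *\<^sub>v y) z + par_sign (x \<and> py) * bform B y (X *\<^sub>v z) = 0)"
    by (simp only: osp_hom_def N_def)
  have "hom_mat N x X \<and> super_adjoint N B x X (- X) \<longleftrightarrow> osp_hom n B x X"
  proof (cases "hom_mat N x X")
    case True
    then have X: "X \<in> carrier_mat N N" by (simp add: hom_mat_def)
    have neg: "bform B y ((- X) *\<^sub>v z) = - bform B y (X *\<^sub>v z)"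
      if "y \<in> carrier_vec N" "z \<in> carrier_vec N" for y z
    proof -
      have "bform B y ((- X) *\<^sub>v z) = y \<bullet> ((B * - X) *\<^sub>v z)"
        using B X that by (intro bform_mult_vec_right) auto
      then show ?thesis
        using B X that by (simp add: bform_def)
    qed
    have "super_adjoint N B x X (- X) \<longleftrightarrow>
        (\<forall>y z py pz. hom_vec N py y \<longrightarrow> hom_vec N pz z \<longrightarrow>
           bform B (X *\<^sub>v y) z = par_sign (x \<and> py) * bform B y ((- X) *\<^sub>v z))"
      using B X by (intro super_adjoint_iff_bform) auto
    also have "\<dots> \<longleftrightarrow> (\<forall>y z py pz. hom_vec N py y \<longrightarrow> hom_vec N pz z \<longrightarrow>
           bform B (X *\<^sub>v y) z + par_sign (x \<and> py) * bform B y (X *\<^sub>v z) = 0)"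
      by (simp add: neg hom_vec_def eq_neg_iff_add_eq_0 del: uminus_mult_mat_vec)
    finally show ?thesis
      using True by (simp add: osp)
  qed (simp add: osp)
  then show ?thesis by (simp add: N_def)
qed

lemma osp_hom_in_osp:
  assumes B: "B \<in> carrier_mat (2*n+1) (2*n+1)" and X: "osp_hom n B x X"
  shows "in_osp n B X"
proof -
  have "- 0\<^sub>m (2*n+1) (2*n+1) = (0\<^sub>m (2*n+1) (2*n+1) :: 'a mat)"
    by (rule eq_matI) auto
  then have zero: "osp_hom n B p (0\<^sub>m (2*n+1) (2*n+1))" for p
    using B by (simp add: osp_hom_iff_super_adjoint hom_mat_def super_adjoint_def)
  have X_carrier: "X \<in> carrier_mat (2*n+1) (2*n+1)" using X by (simp add: osp_hom_def hom_mat_def)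
  let ?O = "0\<^sub>m (2*n+1) (2*n+1) :: 'a mat"
  show ?thesis
    unfolding in_osp_def
  proof (cases x)
    case True
    then show "\<exists>X0 X1. osp_hom n B False X0 \<and> osp_hom n B True X1 \<and> X = X0 + X1"
      using X zero X_carrier by (intro exI[of _ ?O] exI[of _ X]) auto
  next
    case False
    then show "\<exists>X0 X1. osp_hom n B False X0 \<and> osp_hom n B True X1 \<and> X = X0 + X1"
      using X zero X_carrier by (intro exI[of _ X] exI[of _ ?O]) auto
  qed
qed

lemma mprod_Nil [simp]: "mprod N [] = 1\<^sub>m N"
  by (simp add: mprod_def)

lemma mprod_Cons [simp]: "mprod N (M # Ms) = M * mprod N Ms"
  by (simp add: mprod_def)

lemma mprod_carrier: "set Ms \<subseteq> carrier_mat N N \<Longrightarrow> mprod N Ms \<in> carrier_mat N N"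
  by (induction Ms) auto

lemma mprod_snoc:
  assumes "set Ms \<subseteq> carrier_mat N N" and "M \<in> carrier_mat N N"
  shows "mprod N (Ms @ [M]) = mprod N Ms * M"
  using assms by (induction Ms) (auto simp: mprod_carrier assoc_mult_mat[of _ N N _ N _ N])

lemma hom_mat_mprod:
  assumes "list_all2 (hom_mat N) qs Ms"
  shows "hom_mat N (odd (count (mset qs) True)) (mprod N Ms)"
  using assms
proof (induction qs Ms rule: list_all2_induct)
  case Nil
  show ?case by (auto simp: hom_mat_def)
next
  case (Cons q qs M Ms)
  then show ?case by (auto dest: hom_mat_mult)
qed

lemma one_smult_mat [simp]: "(1::'a::monoid_mult) \<cdot>\<^sub>m A = A"
  by (rule eq_matI) auto

lemma smult_smult_mat: "a \<cdot>\<^sub>m (b \<cdot>\<^sub>m A) = (a * b :: 'a::semigroup_mult) \<cdot>\<^sub>m A"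
  by (rule eq_matI) (auto simp: mult.assoc)

lemma super_adjoint_mprod:
  assumes B: "B \<in> carrier_mat N N"
    and Ms: "list_all2 (\<lambda>q M. hom_mat N q M \<and> super_adjoint N B q M (- M)) qs Ms"
  shows "super_adjoint N B (odd (count (mset qs) True)) (mprod N Ms)
           ((-1) ^ (length Ms + (count (mset qs) True choose 2)) \<cdot>\<^sub>m mprod N (rev Ms))"
  using Ms
proof (induction qs Ms rule: list_all2_induct)
  case Nil
  show ?case using B by (simp add: super_adjoint_def parity_sign_mat_False numeral_2_eq_2)
next
  case (Cons q qs M Ms)
  let ?c = "count (mset qs) True"
  let ?R = "mprod N (rev Ms)"
  have M: "M \<in> carrier_mat N N" using Cons.hyps by (simp add: hom_mat_def)
  have hom_Ms: "list_all2 (hom_mat N) qs Ms" using Cons.hyps(2) by (rule list_all2_mono) simp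
  have set_Ms: "set Ms \<subseteq> carrier_mat N N"
    using hom_Ms by (auto simp: list_all2_conv_all_nth in_set_conv_nth hom_mat_def)
  have R: "?R \<in> carrier_mat N N" using set_Ms by (simp add: mprod_carrier)
  have "super_adjoint N B (q \<noteq> odd ?c) (M * mprod N Ms)
      (par_sign (q \<and> odd ?c) \<cdot>\<^sub>m (((-1) ^ (length Ms + (?c choose 2)) \<cdot>\<^sub>m ?R) * - M))"
    using B M R Cons.hyps Cons.IH hom_mat_mprod[OF hom_Ms] by (intro super_adjoint_mult) auto
  moreover have "par_sign (q \<and> odd ?c) \<cdot>\<^sub>m (((-1) ^ (length Ms + (?c choose 2)) \<cdot>\<^sub>m ?R) * - M) =
      (-1) ^ (length (M # Ms) + (count (mset (q # qs)) True choose 2)) \<cdot>\<^sub>m mprod N (rev (M # Ms))"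
    using M R set_Ms
    by (auto simp: mprod_snoc mult_smult_assoc_mat[of _ N N _ N] mult_smult_distrib[of _ N N _ N]
        smult_smult_mat par_sign_def power_add numeral_2_eq_2)
  moreover have "odd (count (mset (q # qs)) True) = (q \<noteq> odd ?c)" by simp
  ultimately show ?case by (simp only: mprod_Cons)
qed

section \<open>Reversal permutation and Koszul signs\<close>

definition rev_perm :: "nat \<Rightarrow> nat \<Rightarrow> nat" where
  "rev_perm m i = (if i < m then m - 1 - i else i)"

lemma rev_perm_rev_perm [simp]: "rev_perm m (rev_perm m i) = i"
  by (auto simp: rev_perm_def)

lemma rev_perm_comp_rev_perm [simp]: "rev_perm m \<circ> rev_perm m = id"
  by (simp add: fun_eq_iff)

lemma rev_perm_permutes: "rev_perm m permutes {..<m}"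
  unfolding permutes_def by (metis lessThan_iff rev_perm_def rev_perm_rev_perm)

lemma rev_map_upt: "rev (map f [0..<m]) = map (\<lambda>i. f (rev_perm m i)) [0..<m]"
  by (rule nth_equalityI) (auto simp: rev_nth rev_perm_def)

lemma rev_perm_Suc_Suc:
  "rev_perm (Suc (Suc k)) =
     Transposition.transpose 0 (Suc k) \<circ> map_permutation {..<k} Suc (rev_perm k)" (is "_ = ?R")
proof
  fix x
  show "rev_perm (Suc (Suc k)) x = ?R x"
  proof (cases "x \<in> Suc ` {..<k}")
    case True
    then obtain i where "i < k" "x = Suc i" by auto
    then show ?thesis by (simp add: map_permutation_apply rev_perm_def)
  next
    case False
    then have "x = 0 \<or> x = Suc k \<or> x > Suc k" by (cases x) (auto simp: image_iff)
    with False show ?thesis by (auto simp: map_permutation_def rev_perm_def)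
  qed
qed

lemma sign_rev_perm: "sign (rev_perm m) = (-1::int) ^ (m div 2)"
proof (induction m rule: nat_induct2)
  case 0
  have "rev_perm 0 = id" by (auto simp: rev_perm_def)
  then show ?case by simp
next
  case 1
  have "rev_perm 1 = id" by (auto simp: rev_perm_def)
  then show ?case by simp
next
  case (step k)
  have shifted: "map_permutation {..<k} Suc (rev_perm k) permutes Suc ` {..<k}"
    by (rule map_permutation_permutes) (simp_all add: bij_betw_def rev_perm_permutes)
  have "sign (rev_perm (k + 2)) = - sign (map_permutation {..<k} Suc (rev_perm k))"
    using sign_compose[OF permutation_swap_id permutes_imp_permutation[OF _ shifted]]
    by (simp add: rev_perm_Suc_Suc sign_swap_id)
  also have "\<dots> = - sign (rev_perm k)"
    using rev_perm_permutes by (simp add: sign_map_permutation)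
  finally show ?case using step.IH by simp
qed

lemma sign_comp_rev_perm:
  assumes "\<sigma> permutes {..<m}"
  shows "sign (\<sigma> \<circ> rev_perm m) = sign \<sigma> * (-1) ^ (m div 2)"
  using sign_compose[OF permutes_imp_permutation[OF _ assms]
      permutes_imp_permutation[OF _ rev_perm_permutes]]
  by (simp add: sign_rev_perm)

lemma sum_permutes_comp_rev_perm:
  "(\<Sum>\<sigma>\<in>{\<sigma>. \<sigma> permutes {..<m}}. g (\<sigma> \<circ> rev_perm m)) = (\<Sum>\<sigma>\<in>{\<sigma>. \<sigma> permutes {..<m}}. g \<sigma>)"
  by (rule sum.reindex_bij_witness[of _ "\<lambda>\<sigma>. \<sigma> \<circ> rev_perm m" "\<lambda>\<sigma>. \<sigma> \<circ> rev_perm m"])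
    (auto simp: fun_eq_iff intro: permutes_compose[OF rev_perm_permutes])

definition odd_inversions :: "nat \<Rightarrow> (nat \<Rightarrow> nat) \<Rightarrow> bool list \<Rightarrow> (nat \<times> nat) set" where
  "odd_inversions m \<sigma> ps = {(i,j). i < j \<and> j < m \<and> \<sigma> j < \<sigma> i \<and> ps ! \<sigma> i \<and> ps ! \<sigma> j}"

lemma koszul_sign_odd_inversions: "koszul_sign m \<sigma> ps = (-1) ^ card (odd_inversions m \<sigma> ps)"
  by (simp add: koszul_sign_def odd_inversions_def)

lemma card_ordered_pairs:
  fixes A :: "'a::linorder set"
  assumes "finite A"
  shows "card {(a,b). a \<in> A \<and> b \<in> A \<and> a < b} = card A choose 2"
proof -
  have "bij_betw (\<lambda>(a,b). {a,b}) {(a,b). a \<in> A \<and> b \<in> A \<and> a < b} {B. B \<subseteq> A \<and> card B = 2}"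
  proof (rule bij_betw_imageI)
    show "inj_on (\<lambda>(a,b). {a,b}) {(a,b). a \<in> A \<and> b \<in> A \<and> a < b}"
      by (auto simp: inj_on_def doubleton_eq_iff)
    show "(\<lambda>(a,b). {a,b}) ` {(a,b). a \<in> A \<and> b \<in> A \<and> a < b} = {B. B \<subseteq> A \<and> card B = 2}"
    proof (intro equalityI subsetI)
      fix B assume "B \<in> {B. B \<subseteq> A \<and> card B = 2}"
      then obtain x y where B: "B = {x,y}" "x \<noteq> y" and "B \<subseteq> A"
        by (auto simp: card_2_iff)
      then show "B \<in> (\<lambda>(a,b). {a,b}) ` {(a,b). a \<in> A \<and> b \<in> A \<and> a < b}"
        by (intro image_eqI[of _ _ "(min x y, max x y)"]) (auto simp: min_def max_def)
    qed auto
  qed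
  then show ?thesis using assms by (simp add: bij_betw_same_card n_subsets)
qed

lemma count_mset_True: "count (mset qs) True = card {i. i < length qs \<and> qs ! i}"
  by (simp add: count_mset count_list_eq_length_filter length_filter_conv_card)

lemma card_odd_inversions_comp_rev_perm:
  "card (odd_inversions m (\<sigma> \<circ> rev_perm m) ps) =
     card {(i,j). i < j \<and> j < m \<and> \<sigma> i < \<sigma> j \<and> ps ! \<sigma> i \<and> ps ! \<sigma> j}"
proof (rule bij_betw_same_card)
  let ?h = "\<lambda>(i,j). (rev_perm m j, rev_perm m i)"
  show "bij_betw ?h (odd_inversions m (\<sigma> \<circ> rev_perm m) ps)
      {(i,j). i < j \<and> j < m \<and> \<sigma> i < \<sigma> j \<and> ps ! \<sigma> i \<and> ps ! \<sigma> j}"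
    by (rule bij_betw_byWitness[where f' = ?h]) (auto simp: odd_inversions_def rev_perm_def)
qed

lemma card_odd_inversions_add_comp_rev_perm:
  assumes \<sigma>: "\<sigma> permutes {..<m}" and ps: "length ps = m"
  shows "card (odd_inversions m (\<sigma> \<circ> rev_perm m) ps) + card (odd_inversions m \<sigma> ps) =
    count (mset ps) True choose 2"
proof -
  define A where "A = {a. a < m \<and> ps ! \<sigma> a}"
  let ?ord = "{(i,j). i < j \<and> j < m \<and> \<sigma> i < \<sigma> j \<and> ps ! \<sigma> i \<and> ps ! \<sigma> j}"
  have "\<sigma> a \<noteq> \<sigma> b" if "a < b" for a b
    using that by (simp add: inj_eq[OF permutes_inj[OF \<sigma>]])
  then have pairs: "{(a,b). a \<in> A \<and> b \<in> A \<and> a < b} = ?ord \<union> odd_inversions m \<sigma> ps"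
    by (auto simp: A_def odd_inversions_def nat_neq_iff)
  have "finite A" by (simp add: A_def)
  then have "card A choose 2 = card (?ord \<union> odd_inversions m \<sigma> ps)"
    by (simp add: card_ordered_pairs flip: pairs)
  also have "\<dots> = card ?ord + card (odd_inversions m \<sigma> ps)"
    by (rule card_Un_disjoint)
      (auto simp: odd_inversions_def intro: finite_subset[of _ "{..<m} \<times> {..<m}"])
  moreover have "card A = count (mset ps) True"
  proof -
    have "\<sigma> ` A = {j. j < m \<and> ps ! j}"
    proof (intro equalityI subsetI)
      fix j assume "j \<in> {j. j < m \<and> ps ! j}"
      moreover have "Hilbert_Choice.inv \<sigma> j < m \<longleftrightarrow> j < m"
        using permutes_in_image[OF permutes_inv[OF \<sigma>]] by simp
      ultimately show "j \<in> \<sigma> ` A"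
        using permutes_inverses(1)[OF \<sigma>]
        by (intro image_eqI[of _ _ "Hilbert_Choice.inv \<sigma> j"]) (auto simp: A_def)
    qed (use permutes_in_image[OF \<sigma>] in \<open>auto simp: A_def\<close>)
    then have "bij_betw \<sigma> A {j. j < m \<and> ps ! j}"
      using permutes_inj[OF \<sigma>] by (simp add: bij_betw_def inj_on_subset[of _ UNIV])
    then show ?thesis using ps by (simp add: count_mset_True bij_betw_same_card)
  qed
  ultimately show ?thesis by (simp add: card_odd_inversions_comp_rev_perm)
qed

lemma koszul_sign_comp_rev_perm:
  assumes "\<sigma> permutes {..<m}" and "length ps = m"
  shows "koszul_sign m (\<sigma> \<circ> rev_perm m) ps =
    (-1) ^ (count (mset ps) True choose 2) * (koszul_sign m \<sigma> ps :: 'a::comm_ring_1)"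
proof -
  have "count (mset ps) True choose 2 =
      card (odd_inversions m (\<sigma> \<circ> rev_perm m) ps) + card (odd_inversions m \<sigma> ps)"
    by (simp add: card_odd_inversions_add_comp_rev_perm[OF assms])
  then show ?thesis
    by (simp add: koszul_sign_odd_inversions power_add mult.assoc)
qed

section \<open>Graded symmetrizers\<close>

definition graded_symmetrizer ::
    "nat \<Rightarrow> ((nat \<Rightarrow> nat) \<Rightarrow> 'a) \<Rightarrow> 'a::comm_ring_1 mat list \<Rightarrow> bool list \<Rightarrow> 'a mat" where
  "graded_symmetrizer N W Xs ps = mat N N (\<lambda>(a,b). \<Sum>\<sigma>\<in>{\<sigma>. \<sigma> permutes {..<length Xs}}.
     W \<sigma> * koszul_sign (length Xs) \<sigma> ps * mprod N (map (\<lambda>i. Xs ! \<sigma> i) [0..<length Xs]) $$ (a,b))"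

lemma Pm_eq_graded_symmetrizer: "Pm N Xs ps = graded_symmetrizer N (\<lambda>_. 1) Xs ps"
  by (simp add: Pm_def graded_symmetrizer_def Let_def)

lemma Am_eq_graded_symmetrizer: "Am N Xs ps = graded_symmetrizer N (\<lambda>\<sigma>. of_int (sign \<sigma>)) Xs ps"
  by (simp add: Am_def graded_symmetrizer_def Let_def)

lemma super_adjoint_permuted_mprod:
  assumes B: "B \<in> carrier_mat (2*n+1) (2*n+1)" and Xs: "hom_osp_tuple n B Xs ps"
    and \<sigma>: "\<sigma> permutes {..<length Xs}"
  defines "c \<equiv> count (mset ps) True" and "m \<equiv> length Xs"
  shows "hom_mat (2*n+1) (odd c) (mprod (2*n+1) (map (\<lambda>i. Xs ! \<sigma> i) [0..<m])) \<and>
    super_adjoint (2*n+1) B (odd c) (mprod (2*n+1) (map (\<lambda>i. Xs ! \<sigma> i) [0..<m]))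
      ((-1) ^ (m + (c choose 2)) \<cdot>\<^sub>m mprod (2*n+1) (map (\<lambda>i. Xs ! (\<sigma> \<circ> rev_perm m) i) [0..<m]))"
proof -
  let ?qs = "map (\<lambda>i. ps ! \<sigma> i) [0..<m]" and ?Ms = "map (\<lambda>i. Xs ! \<sigma> i) [0..<m]"
  have len: "length ps = m" using Xs by (simp add: hom_osp_tuple_def m_def)
  have "\<sigma> i < m" if "i < m" for i
    using permutes_in_image[OF \<sigma>] that by (simp add: m_def)
  then have factors:
      "list_all2 (\<lambda>q M. hom_mat (2*n+1) q M \<and> super_adjoint (2*n+1) B q M (- M)) ?qs ?Ms"
    using Xs
    by (auto simp: list_all2_conv_all_nth hom_osp_tuple_def osp_hom_iff_super_adjoint[OF B] m_def)
  moreover have count: "count (mset ?qs) True = c"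
    using mset_permute_list[of \<sigma> ps] \<sigma> len by (simp add: c_def permute_list_def m_def)
  have "hom_mat (2*n+1) (odd c) (mprod (2*n+1) ?Ms)"
    using hom_mat_mprod[OF list_all2_mono[OF factors]] count by simp
  moreover have "super_adjoint (2*n+1) B (odd c) (mprod (2*n+1) ?Ms)
      ((-1) ^ (m + (c choose 2)) \<cdot>\<^sub>m mprod (2*n+1) (rev ?Ms))"
    using super_adjoint_mprod[OF B factors] count by simp
  ultimately show ?thesis by (simp add: rev_map_upt)
qed

lemma lincomb_comp_rev_perm_eq_uminus:
  fixes f :: "(nat \<Rightarrow> nat) \<Rightarrow> 'a::comm_ring_1"
  assumes coeff: "\<And>\<sigma>. \<sigma> permutes {..<m} \<Longrightarrow> f (\<sigma> \<circ> rev_perm m) * s = - f \<sigma>"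
    and T: "\<And>\<sigma>. \<sigma> permutes {..<m} \<Longrightarrow> T \<sigma> \<in> carrier_mat N N"
  shows "mat N N (\<lambda>(a,b). \<Sum>\<sigma>\<in>{\<sigma>. \<sigma> permutes {..<m}}. f \<sigma> * (s \<cdot>\<^sub>m T (\<sigma> \<circ> rev_perm m)) $$ (a,b))
       = - mat N N (\<lambda>(a,b). \<Sum>\<sigma>\<in>{\<sigma>. \<sigma> permutes {..<m}}. f \<sigma> * T \<sigma> $$ (a,b))"
    (is "mat N N (\<lambda>(a,b). \<Sum>\<sigma>\<in>?P. _) = _")
proof (rule eq_matI)
  fix a b assume "a < dim_row (- mat N N (\<lambda>(a,b). \<Sum>\<sigma>\<in>?P. f \<sigma> * T \<sigma> $$ (a,b)))"
    and "b < dim_col (- mat N N (\<lambda>(a,b). \<Sum>\<sigma>\<in>?P. f \<sigma> * T \<sigma> $$ (a,b)))"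
  then have ab: "a < N" "b < N" by simp_all
  have "(\<Sum>\<sigma>\<in>?P. f \<sigma> * (s \<cdot>\<^sub>m T (\<sigma> \<circ> rev_perm m)) $$ (a,b))
      = (\<Sum>\<sigma>\<in>?P. f \<sigma> * s * T (\<sigma> \<circ> rev_perm m) $$ (a,b))"
  proof (rule sum.cong[OF refl])
    fix \<sigma> assume "\<sigma> \<in> ?P"
    then have "T (\<sigma> \<circ> rev_perm m) \<in> carrier_mat N N"
      by (simp add: T permutes_compose rev_perm_permutes)
    then show "f \<sigma> * (s \<cdot>\<^sub>m T (\<sigma> \<circ> rev_perm m)) $$ (a,b) = f \<sigma> * s * T (\<sigma> \<circ> rev_perm m) $$ (a,b)"
      using ab by (simp add: mult.assoc)
  qed
  also have "\<dots> = (\<Sum>\<sigma>\<in>?P. f (\<sigma> \<circ> rev_perm m) * s * T \<sigma> $$ (a,b))"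
    using sum_permutes_comp_rev_perm[of "\<lambda>\<sigma>. f (\<sigma> \<circ> rev_perm m) * s * T \<sigma> $$ (a,b)" m]
    by (simp add: comp_assoc)
  also have "\<dots> = - (\<Sum>\<sigma>\<in>?P. f \<sigma> * T \<sigma> $$ (a,b))"
    by (simp add: coeff sum_negf)
  finally show "mat N N (\<lambda>(a,b). \<Sum>\<sigma>\<in>?P. f \<sigma> * (s \<cdot>\<^sub>m T (\<sigma> \<circ> rev_perm m)) $$ (a,b)) $$ (a,b)
      = (- mat N N (\<lambda>(a,b). \<Sum>\<sigma>\<in>?P. f \<sigma> * T \<sigma> $$ (a,b))) $$ (a,b)"
    using ab by simp
qed auto

lemma weighted_koszul_sign_comp_rev_perm:
  fixes W :: "(nat \<Rightarrow> nat) \<Rightarrow> 'a::comm_ring_1"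
  assumes "\<sigma> permutes {..<m}" and "length ps = m"
    and W: "W (\<sigma> \<circ> rev_perm m) * (-1) ^ m = - W \<sigma>"
  shows "W (\<sigma> \<circ> rev_perm m) * koszul_sign m (\<sigma> \<circ> rev_perm m) ps *
      (-1) ^ (m + (count (mset ps) True choose 2)) = - (W \<sigma> * koszul_sign m \<sigma> ps)"
proof -
  let ?C = "count (mset ps) True choose 2"
  have "W (\<sigma> \<circ> rev_perm m) * koszul_sign m (\<sigma> \<circ> rev_perm m) ps * (-1) ^ (m + ?C)
      = (W (\<sigma> \<circ> rev_perm m) * (-1) ^ m) * ((-1) ^ ?C * koszul_sign m (\<sigma> \<circ> rev_perm m) ps)"
    by (simp add: power_add mult_ac)
  also have "\<dots> = - (W \<sigma> * koszul_sign m \<sigma> ps)"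
    by (simp add: W koszul_sign_comp_rev_perm[OF assms(1,2)] mult.assoc)
  finally show ?thesis .
qed

lemma graded_symmetrizer_in_osp:
  fixes W :: "(nat \<Rightarrow> nat) \<Rightarrow> 'a::comm_ring_1"
  assumes B: "B \<in> carrier_mat (2*n+1) (2*n+1)" and Xs: "hom_osp_tuple n B Xs ps"
    and W: "\<And>\<sigma>. \<sigma> permutes {..<length Xs} \<Longrightarrow>
              W (\<sigma> \<circ> rev_perm (length Xs)) * (-1) ^ length Xs = - W \<sigma>"
  shows "in_osp n B (graded_symmetrizer (2*n+1) W Xs ps)"
proof -
  define N m c where "N = 2*n+1" and "m = length Xs" and "c = count (mset ps) True"
  define Perms where "Perms = {\<sigma>. \<sigma> permutes {..<m}}"
  define T where "T \<sigma> = mprod N (map (\<lambda>i. Xs ! \<sigma> i) [0..<m])" for \<sigma>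
  define f where "f \<sigma> = W \<sigma> * koszul_sign m \<sigma> ps" for \<sigma>
  define s :: 'a where "s = (-1) ^ (m + (c choose 2))"
  define G where "G = mat N N (\<lambda>(a,b). \<Sum>\<sigma>\<in>Perms. f \<sigma> * T \<sigma> $$ (a,b))"
  have G_eq: "graded_symmetrizer (2*n+1) W Xs ps = G"
    by (simp add: G_def graded_symmetrizer_def Perms_def f_def T_def m_def N_def)
  have len: "length ps = m" using Xs by (simp add: hom_osp_tuple_def m_def)
  have T_adj: "hom_mat N (odd c) (T \<sigma>) \<and> super_adjoint N B (odd c) (T \<sigma>) (s \<cdot>\<^sub>m T (\<sigma> \<circ> rev_perm m))"
    if "\<sigma> \<in> Perms" for \<sigma>
    using super_adjoint_permuted_mprod[OF B Xs] that
    by (simp add: N_def m_def c_def s_def T_def Perms_def)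
  then have T_carrier: "T \<sigma> \<in> carrier_mat N N" if "\<sigma> \<in> Perms" for \<sigma>
    using that by (simp add: hom_mat_def)
  have "super_adjoint N B (odd c) G
      (mat N N (\<lambda>(a,b). \<Sum>\<sigma>\<in>Perms. f \<sigma> * (s \<cdot>\<^sub>m T (\<sigma> \<circ> rev_perm m)) $$ (a,b)))"
    unfolding G_def using B T_adj T_carrier
    by (intro super_adjoint_lincomb) (auto simp: N_def Perms_def permutes_compose rev_perm_permutes)
  also have "mat N N (\<lambda>(a,b). \<Sum>\<sigma>\<in>Perms. f \<sigma> * (s \<cdot>\<^sub>m T (\<sigma> \<circ> rev_perm m)) $$ (a,b)) = - G"
    unfolding G_def Perms_def
  proof (rule lincomb_comp_rev_perm_eq_uminus)
    fix \<sigma> assume \<sigma>: "\<sigma> permutes {..<m}"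
    then have "W (\<sigma> \<circ> rev_perm m) * (-1) ^ m = - W \<sigma>"
      using W by (simp only: m_def)
    then show "f (\<sigma> \<circ> rev_perm m) * s = - f \<sigma>"
      unfolding f_def s_def c_def by (rule weighted_koszul_sign_comp_rev_perm[OF \<sigma> len])
  qed (use T_carrier in \<open>simp add: Perms_def\<close>)
  finally have "super_adjoint N B (odd c) G (- G)" .
  moreover have "hom_mat N (odd c) G"
    unfolding G_def using T_adj by (intro hom_mat_lincomb) auto
  ultimately have "osp_hom n B (odd c) G"
    by (simp add: osp_hom_iff_super_adjoint[OF B] N_def)
  then show ?thesis
    unfolding G_eq by (rule osp_hom_in_osp[OF B])
qed

theorem lemma5p1:
  fixes n p :: nat and B :: "'a::field_char_0 mat"
  assumes "n \<ge> 1" and "osp_form n B"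
  shows "(\<forall>Xs ps. length Xs = 2*p+1 \<longrightarrow> hom_osp_tuple n B Xs ps \<longrightarrow>
            in_osp n B (Pm (2*n+1) Xs ps)) \<and>
         (\<forall>Xs ps. length Xs = 4*p+1 \<longrightarrow> hom_osp_tuple n B Xs ps \<longrightarrow>
            in_osp n B (Am (2*n+1) Xs ps)) \<and>
         (\<forall>Xs ps. length Xs = 4*p+2 \<longrightarrow> hom_osp_tuple n B Xs ps \<longrightarrow>
            in_osp n B (Am (2*n+1) Xs ps))"
proof -
  have B: "B \<in> carrier_mat (2*n+1) (2*n+1)" using assms(2) by (simp add: osp_form_def)
  have sign: "of_int (sign (\<sigma> \<circ> rev_perm m)) * (-1) ^ m = - (of_int (sign \<sigma>) :: 'a)"
    if "\<sigma> permutes {..<m}" and "m = 4*p+1 \<or> m = 4*p+2" for \<sigma> m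
    using that by (auto simp: sign_comp_rev_perm power_add power_mult)
  show ?thesis
  proof (intro conjI allI impI)
    fix Xs ps assume "length Xs = 2*p+1" and "hom_osp_tuple n B Xs ps"
    then show "in_osp n B (Pm (2*n+1) Xs ps)"
      unfolding Pm_eq_graded_symmetrizer by (intro graded_symmetrizer_in_osp[OF B]) auto
  next
    fix Xs ps assume "length Xs = 4*p+1" and "hom_osp_tuple n B Xs ps"
    then show "in_osp n B (Am (2*n+1) Xs ps)"
      unfolding Am_eq_graded_symmetrizer by (intro graded_symmetrizer_in_osp[OF B] sign) auto
  next
    fix Xs ps assume "length Xs = 4*p+2" and "hom_osp_tuple n B Xs ps"
    then show "in_osp n B (Am (2*n+1) Xs ps)"
      unfolding Am_eq_graded_symmetrizer by (intro graded_symmetrizer_in_osp[OF B] sign) auto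
  qed
qed

end
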